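(* Let $0<q<1$, $m,n\in\mathbb N_0$, $z_1,z_2\in\mathbb C$. (i) If $|bq|<1$ and $u,v\in\mathbb C$ are sufficiently small (e.g. $|uz_1|,|vz_2|,|uv|<1$), then $$\sum_{m,n=0}^\infty\frac{p_{m,n}(z_1,z_2;b|q)}{(q;q)_m(q;q)_n}u^mv^n=(bq;q)_\infty\sum_{j=0}^\infty\frac{(bq)^j}{(q;q)_j}\frac{(uvq^j;q)_\infty}{(uz_1q^j,vz_2q^j;q)_\infty}=\frac{(bq,uv;q)_\infty}{(uz_1,vz_2;q)_\infty}\sum_{j=0}^\infty\frac{(uz_1,vz_2;q)_j}{(q,uv;q)_j}(bq)^j.$$ (ii) If $|bq|<1$, $|cq|<1$ and $b\ne0$, then $$\frac{p_{m,n}(z_1,z_2;b|q)}{(bq;q)_\infty}=\sum_{j=0}^\infty\frac{(c/b;q)_j}{(q;q)_j}\big(bq^{\frac{m+n}2+1}\big)^j\frac{p_{m,n}(z_1q^{j/2},z_2q^{j/2};c|q)}{(cq;q)_\infty}.$$ (iii) If $|bq|<1$, then $$\frac{p_{m,n}(z_1,z_2;b|q)}{(bq;q)_\infty}=\sum_{j=0}^\infty\frac{\big(bq^{(m+n)/2+1}\big)^j}{(q;q)_j}H_{m,n}(z_1q^{j/2},z_2q^{j/2}|q),$$ and conversely $$H_{m,n}(z_1,z_2|q)=\frac{1}{(bq;q)_\infty}\sum_{k=0}^\infty\frac{\big(-bq^{(m+n)/2+1}\big)^k}{(q;q)_k}q^{\binom k2}p_{m,n}(z_1q^{k/2},z_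2q^{k/2};b|q).$$
   Context: $(a;q)_n=\prod_{j=0}^{n-1}(1-aq^j)$, $(a;q)_\infty=\prod_{j\ge0}(1-aq^j)$, $(a_1,\dots,a_r;q)_n=\prod_i(a_i;q)_n$, $\left[{m\atop k}\right]_q=\frac{(q;q)_m}{(q;q)_k(q;q)_{m-k}}$, $m\wedge n=\min\{m,n\}$. The first $q$-$2D$-Hermite polynomials are $$H_{m,n}(z_1,z_2|q)=\sum_{k=0}^{m\wedge n}\left[{m\atop k}\right]_q\left[{n\atop k}\right]_q(-1)^kq^{\binom k2}(q;q)_k\,z_1^{m-k}z_2^{n-k},$$ and the $q$-$2D$ ultraspherical polynomials are $$p_{m,n}(z_1,z_2;b|q)=\sum_{k=0}^{m\wedge n}\left[{m\atop k}\right]_q\left[{n\atop k}\right]_q(-1)^kq^{\binom k2}(q;q)_k\,(bq;q)_{m+n-k}\,z_1^{m-k}z_2^{n-k}.$$ *)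

theory Defs
  imports "HOL-Analysis.Analysis"
begin

definition qpoch :: "complex \<Rightarrow> complex \<Rightarrow> nat \<Rightarrow> complex" where
  "qpoch a q n = (\<Prod>j<n. 1 - a * q ^ j)"

definition qpoch_inf :: "complex \<Rightarrow> complex \<Rightarrow> complex" where
  "qpoch_inf a q = lim (\<lambda>N. qpoch a q N)"

text \<open>Gaussian q-binomial coefficient [m choose k]_q (used for k \<le> m).\<close>
definition qbinom :: "complex \<Rightarrow> nat \<Rightarrow> nat \<Rightarrow> complex" where
  "qbinom q m k = qpoch q q m / (qpoch q q k * qpoch q q (m - k))"

definition qH :: "complex \<Rightarrow> complex \<Rightarrow> complex \<Rightarrow> nat \<Rightarrow> nat \<Rightarrow> complex" where
  "qH z1 z2 q m n = (\<Sum>k\<le>min m n. qbinom q m k * qbinom q n k * (-1) ^ k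
      * q ^ (k choose 2) * qpoch q q k * z1 ^ (m - k) * z2 ^ (n - k))"

definition qp :: "complex \<Rightarrow> complex \<Rightarrow> complex \<Rightarrow> complex \<Rightarrow> nat \<Rightarrow> nat \<Rightarrow> complex" where
  "qp z1 z2 b q m n = (\<Sum>k\<le>min m n. qbinom q m k * qbinom q n k * (-1) ^ k
      * q ^ (k choose 2) * qpoch q q k * qpoch (b * q) q (m + n - k)
      * z1 ^ (m - k) * z2 ^ (n - k))"

end

theory Submission
  imports Defs
begin

text \<open>All identities rest on the homogeneous q-binomial theorem
  \<open>\<Sum>j. (\<alpha> - \<beta>)(\<alpha> - \<beta> q)\<cdots>(\<alpha> - \<beta> q^(j-1)) / (q;q)_j * x^j = (\<beta> x;q)_\<infinity> / (\<alpha> x;q)_\<infinity>\<close>,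
  whose special cases are Euler's series for \<open>1 / (x;q)_\<infinity>\<close> and \<open>(x;q)_\<infinity>\<close> and the q-binomial
  theorem.

  In \<open>(b q^((m+n)/2+1))^j * p_{m,n}(z1 q^(j/2), z2 q^(j/2))\<close> the k-th term depends on j only
  through the geometric factor \<open>(b q^(m+n-k+1))^j\<close>. Summing over j first with the matching
  classical series and using \<open>(a q^N;q)_\<infinity> = (a;q)_\<infinity> / (a;q)_N\<close> turns (ii) and (iii) into finite
  rearrangements of the defining sums.

  For (i), the coefficient of \<open>u^m v^n\<close> splits into Euler terms in \<open>uv\<close>, \<open>u z1\<close>, \<open>v z2\<close> times
  \<open>(bq;q)_(m+n-k) = (bq;q)_\<infinity> * \<Sum>j. (b q^(m+n-k+1))^j / (q;q)_j\<close>. Exchanging the resulting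
  absolutely convergent sums gives the first expression; the same shift rule for \<open>(\<cdot>;q)_\<infinity>\<close>
  gives the second.\<close>

lemma qpoch_0 [simp]: "qpoch a Q 0 = 1"
  by (simp add: qpoch_def)

lemma qpoch_Suc: "qpoch a Q (Suc n) = qpoch a Q n * (1 - a * Q ^ n)"
  by (simp add: qpoch_def)

lemma qpoch_add: "qpoch a Q (k + n) = qpoch a Q k * qpoch (a * Q ^ k) Q n"
  by (induction n) (simp_all add: qpoch_Suc power_add mult_ac)

lemma norm_mult_less_one:
  fixes a b :: "'a::real_normed_div_algebra"
  assumes "norm a \<le> 1" "norm b < 1"
  shows "norm (a * b) < 1"
  using assms mult_left_le_one_le[of "norm b" "norm a"] by (simp add: norm_mult)

lemma norm_mult_power_less_one:
  fixes a Q :: "'a::real_normed_div_algebra"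
  assumes "norm Q \<le> 1" "norm a < 1"
  shows "norm (a * Q ^ j) < 1"
  using assms mult_right_le_one_le[of "norm a" "norm Q ^ j"]
  by (simp add: norm_mult norm_power power_le_one)

lemma qpoch_factor_nonzero:
  fixes a Q :: complex
  assumes "norm Q \<le> 1" "norm a < 1"
  shows "1 - a * Q ^ j \<noteq> 0"
  using norm_mult_power_less_one[OF assms, of j] by auto

lemma qpoch_nonzero:
  fixes a Q :: complex
  assumes "norm Q \<le> 1" "norm a < 1"
  shows "qpoch a Q n \<noteq> 0"
  using qpoch_factor_nonzero[OF assms] by (simp add: qpoch_def)

lemma convergent_prod_qpoch:
  fixes a Q :: complex
  assumes "norm Q < 1"
  shows "convergent_prod (\<lambda>j. 1 - a * Q ^ j)"
proof -
  have "summable (\<lambda>j. norm a * norm Q ^ j)"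
    using assms by (intro summable_mult summable_geometric) auto
  then have "summable (\<lambda>j. norm ((1 - a * Q ^ j) - 1))"
    by (simp add: norm_mult norm_power)
  then show ?thesis
    by (intro abs_convergent_prod_imp_convergent_prod summable_imp_abs_convergent_prod)
qed

lemma
  fixes a Q :: complex
  assumes "norm Q < 1"
  shows qpoch_inf_eq_prodinf: "qpoch_inf a Q = (\<Prod>j. 1 - a * Q ^ j)"
    and qpoch_LIMSEQ: "(\<lambda>n. qpoch a Q n) \<longlonglongrightarrow> qpoch_inf a Q"
proof -
  have "(\<lambda>n. qpoch a Q (Suc n)) \<longlonglongrightarrow> (\<Prod>j. 1 - a * Q ^ j)"
    using convergent_prod_LIMSEQ[OF convergent_prod_qpoch[OF assms]]
    by (simp add: qpoch_def lessThan_Suc_atMost)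
  then have lim: "(\<lambda>n. qpoch a Q n) \<longlonglongrightarrow> (\<Prod>j. 1 - a * Q ^ j)"
    by (simp add: filterlim_sequentially_Suc)
  then show "qpoch_inf a Q = (\<Prod>j. 1 - a * Q ^ j)"
    unfolding qpoch_inf_def by (rule limI)
  with lim show "(\<lambda>n. qpoch a Q n) \<longlonglongrightarrow> qpoch_inf a Q"
    by simp
qed

lemma qpoch_inf_nonzero:
  fixes a Q :: complex
  assumes "norm Q < 1" "norm a < 1"
  shows "qpoch_inf a Q \<noteq> 0"
  unfolding qpoch_inf_eq_prodinf[OF assms(1)] using assms
  by (intro prodinf_nonzero convergent_prod_qpoch qpoch_factor_nonzero) auto

lemma qpoch_inf_zero: "norm Q < 1 \<Longrightarrow> qpoch_inf 0 Q = 1"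
  using qpoch_LIMSEQ[of Q 0] by (simp add: qpoch_def LIMSEQ_const_iff)

lemma qpoch_inf_shift:
  fixes a Q :: complex
  assumes "norm Q < 1" "norm a < 1"
  shows "qpoch_inf (a * Q ^ k) Q = qpoch_inf a Q / qpoch a Q k"
proof -
  have nz: "qpoch a Q k \<noteq> 0"
    using assms by (intro qpoch_nonzero) auto
  have "(\<lambda>n. qpoch a Q (k + n) / qpoch a Q k) \<longlonglongrightarrow> qpoch_inf a Q / qpoch a Q k"
    using LIMSEQ_ignore_initial_segment[OF qpoch_LIMSEQ[OF assms(1), of a], of k] nz
    by (intro tendsto_divide) (simp_all add: add.commute)
  moreover have "(\<lambda>n. qpoch a Q (k + n) / qpoch a Q k) = (\<lambda>n. qpoch (a * Q ^ k) Q n)"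
    using nz by (simp add: qpoch_add)
  ultimately show ?thesis
    using qpoch_LIMSEQ[OF assms(1), of "a * Q ^ k"] LIMSEQ_unique by metis
qed

definition qpoch_hom :: "complex \<Rightarrow> complex \<Rightarrow> complex \<Rightarrow> nat \<Rightarrow> complex" where
  "qpoch_hom \<alpha> \<beta> Q n = (\<Prod>i<n. \<alpha> - \<beta> * Q ^ i)"

lemma qpoch_hom_one: "qpoch_hom 1 a Q n = qpoch a Q n"
  by (simp add: qpoch_hom_def qpoch_def)

lemma qpoch_hom_zero_one: "qpoch_hom 0 1 Q n = (-1) ^ n * Q ^ (n choose 2)"
proof (induction n)
  case (Suc n)
  have "Suc n choose 2 = n + (n choose 2)"
    by (simp add: numeral_2_eq_2)
  with Suc show ?case
    by (simp add: qpoch_hom_def power_add mult_ac)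
qed (simp add: qpoch_hom_def numeral_2_eq_2)

lemma qpoch_hom_Suc: "qpoch_hom \<alpha> \<beta> Q (Suc n) = qpoch_hom \<alpha> \<beta> Q n * (\<alpha> - \<beta> * Q ^ n)"
  by (simp add: qpoch_hom_def)

lemma norm_qpoch_hom_le:
  fixes \<alpha> \<beta> Q :: complex
  assumes "norm Q < 1" "norm \<alpha> \<le> 1"
  shows "norm (qpoch_hom \<alpha> \<beta> Q n) \<le> exp (norm \<beta> / (1 - norm Q))"
proof -
  have "norm (qpoch_hom \<alpha> \<beta> Q n) = (\<Prod>i<n. norm (\<alpha> - \<beta> * Q ^ i))"
    by (simp add: qpoch_hom_def prod_norm)
  also have "\<dots> \<le> (\<Prod>i<n. exp (norm \<beta> * norm Q ^ i))"
  proof (rule prod_mono)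
    fix i
    have "norm (\<alpha> - \<beta> * Q ^ i) \<le> 1 + norm \<beta> * norm Q ^ i"
      using norm_triangle_ineq4[of \<alpha> "\<beta> * Q ^ i"] assms(2) by (simp add: norm_mult norm_power)
    also have "\<dots> \<le> exp (norm \<beta> * norm Q ^ i)"
      by (rule exp_ge_add_one_self)
    finally show "0 \<le> norm (\<alpha> - \<beta> * Q ^ i) \<and> norm (\<alpha> - \<beta> * Q ^ i) \<le> exp (norm \<beta> * norm Q ^ i)"
      by simp
  qed
  also have "\<dots> = exp (norm \<beta> * (\<Sum>i<n. norm Q ^ i))"
    by (simp add: exp_sum sum_distrib_left)
  also have "\<dots> \<le> exp (norm \<beta> * (1 / (1 - norm Q)))"
  proof -
    have "(\<Sum>i<n. norm Q ^ i) \<le> (\<Sum>i. norm Q ^ i)"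
      using assms(1) by (intro sum_le_suminf summable_geometric) auto
    also have "\<dots> = 1 / (1 - norm Q)"
      using assms(1) by (intro suminf_geometric) auto
    finally have "(\<Sum>i<n. norm Q ^ i) \<le> 1 / (1 - norm Q)" .
    from mult_left_mono[OF this, of "norm \<beta>"] show ?thesis
      by simp
  qed
  finally show ?thesis
    by simp
qed

lemma summable_norm_qpoch_hom_series:
  fixes \<alpha> \<beta> Q y :: complex
  assumes "norm Q < 1" "norm \<alpha> \<le> 1" "norm y < 1"
  shows "summable (\<lambda>j. norm (qpoch_hom \<alpha> \<beta> Q j / qpoch Q Q j * y ^ j))"
proof -
  have "(\<lambda>j. inverse (qpoch Q Q j)) \<longlonglongrightarrow> inverse (qpoch_inf Q Q)"
    using assms(1) by (intro tendsto_inverse qpoch_LIMSEQ qpoch_inf_nonzero)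
  then have "Bseq (\<lambda>j. inverse (qpoch Q Q j))"
    by (intro convergent_imp_Bseq convergentI)
  then obtain K where K: "\<And>j. norm (inverse (qpoch Q Q j)) \<le> K"
    by (metis BseqE)
  define C where "C = exp (norm \<beta> / (1 - norm Q)) * K"
  show ?thesis
  proof (rule summable_comparison_test')
    show "summable (\<lambda>j. C * norm y ^ j)"
      using assms(3) by (intro summable_mult summable_geometric) auto
    fix j
    have "norm (qpoch_hom \<alpha> \<beta> Q j / qpoch Q Q j)
        = norm (qpoch_hom \<alpha> \<beta> Q j) * norm (inverse (qpoch Q Q j))"
      by (simp add: divide_inverse norm_mult)
    also have "\<dots> \<le> C"
      unfolding C_def by (intro mult_mono norm_qpoch_hom_le K assms) auto
    finally have "norm (qpoch_hom \<alpha> \<beta> Q j / qpoch Q Q j) \<le> C" .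
    from mult_right_mono[OF this, of "norm y ^ j"]
    show "norm (norm (qpoch_hom \<alpha> \<beta> Q j / qpoch Q Q j * y ^ j)) \<le> C * norm y ^ j"
      by (simp add: norm_mult norm_power norm_divide)
  qed
qed

lemma suminf_mult_one_minus:
  fixes d :: "nat \<Rightarrow> 'a::{real_normed_field,banach}"
  assumes "summable (\<lambda>j. d j * y ^ j)"
  shows "(1 - t * y) * (\<Sum>j. d j * y ^ j) = d 0 + (\<Sum>j. (d (Suc j) - t * d j) * y ^ Suc j)"
proof -
  define S where "S = (\<Sum>j. d j * y ^ j)"
  have s: "(\<lambda>j. d j * y ^ j) sums S"
    using assms by (simp add: S_def summable_sums)
  moreover have "(\<lambda>j. d (Suc j) * y ^ Suc j) sums (S - d 0)"
    using s by (subst sums_Suc_iff) simp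
  ultimately have "(\<lambda>j. d (Suc j) * y ^ Suc j - t * y * (d j * y ^ j)) sums (S - d 0 - t * y * S)"
    by (intro sums_diff sums_mult)
  then have "(\<lambda>j. (d (Suc j) - t * d j) * y ^ Suc j) sums (S - d 0 - t * y * S)"
    by (simp add: algebra_simps)
  then show ?thesis
    unfolding S_def[symmetric] by (simp add: sums_iff algebra_simps)
qed

text \<open>The coefficients satisfy \<open>c (j + 1) * (1 - Q^(j+1)) = c j * (\<alpha> - \<beta> Q^j)\<close>.\<close>
lemma qpoch_hom_series_functional_eq:
  fixes \<alpha> \<beta> Q y :: complex
  assumes Q: "norm Q < 1" and \<alpha>: "norm \<alpha> \<le> 1" and y: "norm y < 1"
  defines "c \<equiv> \<lambda>j. qpoch_hom \<alpha> \<beta> Q j / qpoch Q Q j"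
  shows "(1 - \<alpha> * y) * (\<Sum>j. c j * y ^ j) = (1 - \<beta> * y) * (\<Sum>j. c j * (Q * y) ^ j)"
proof -
  have Qy: "norm (Q * y) < 1"
    using Q y by (intro norm_mult_less_one) auto
  have s1: "summable (\<lambda>j. c j * y ^ j)"
    using summable_norm_qpoch_hom_series[OF Q \<alpha> y] unfolding c_def by (rule summable_norm_cancel)
  have s2: "summable (\<lambda>j. (c j * Q ^ j) * y ^ j)"
    using summable_norm_cancel[OF summable_norm_qpoch_hom_series[OF Q \<alpha> Qy]]
    unfolding c_def by (simp add: power_mult_distrib mult_ac)
  have "qpoch Q Q j \<noteq> 0" "1 - Q * Q ^ j \<noteq> 0" for j
    using qpoch_nonzero[of Q Q j] qpoch_factor_nonzero[of Q Q j] Q by auto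
  then have "c (Suc j) - \<alpha> * c j = c (Suc j) * Q ^ Suc j - \<beta> * (c j * Q ^ j)" for j
    unfolding c_def by (simp add: qpoch_hom_Suc qpoch_Suc field_simps)
  then show ?thesis
    using suminf_mult_one_minus[OF s1, of \<alpha>] suminf_mult_one_minus[OF s2, of \<beta>]
    by (simp add: power_mult_distrib mult_ac c_def)
qed

text \<open>Iterating the functional equation expresses \<open>F x\<close> through \<open>F (x Q^N)\<close>, which tends to
  \<open>F 0 = 1\<close>.\<close>
lemma qpoch_hom_has_sum:
  fixes \<alpha> \<beta> Q x :: complex
  assumes Q: "norm Q < 1" and \<alpha>: "norm \<alpha> \<le> 1" and x: "norm x < 1"
  shows "((\<lambda>j. qpoch_hom \<alpha> \<beta> Q j / qpoch Q Q j * x ^ j)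
           has_sum qpoch_inf (\<beta> * x) Q / qpoch_inf (\<alpha> * x) Q) UNIV"
proof -
  define c where "c j = qpoch_hom \<alpha> \<beta> Q j / qpoch Q Q j" for j
  define F where "F y = (\<Sum>j. c j * y ^ j)" for y
  have xQ: "norm (x * Q ^ N) < 1" for N
    using Q x by (intro norm_mult_power_less_one) auto
  have iter: "F x = qpoch (\<beta> * x) Q N / qpoch (\<alpha> * x) Q N * F (x * Q ^ N)" for N
  proof (induction N)
    case (Suc N)
    have "1 - \<alpha> * (x * Q ^ N) \<noteq> 0"
      using norm_mult_less_one[OF \<alpha> xQ[of N]] by auto
    moreover have "(1 - \<alpha> * (x * Q ^ N)) * F (x * Q ^ N) = (1 - \<beta> * (x * Q ^ N)) * F (Q * (x * Q ^ N))"
      unfolding F_def c_def by (rule qpoch_hom_series_functional_eq[OF Q \<alpha> xQ])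
    ultimately have step: "F (x * Q ^ N) = (1 - \<beta> * x * Q ^ N) / (1 - \<alpha> * x * Q ^ N) * F (x * Q ^ Suc N)"
      by (simp add: field_simps)
    have "F x = qpoch (\<beta> * x) Q N / qpoch (\<alpha> * x) Q N * F (x * Q ^ N)"
      by (rule Suc.IH)
    also have "\<dots> = qpoch (\<beta> * x) Q N / qpoch (\<alpha> * x) Q N
        * ((1 - \<beta> * x * Q ^ N) / (1 - \<alpha> * x * Q ^ N)) * F (x * Q ^ Suc N)"
      unfolding step by (rule mult.assoc[symmetric])
    also have "qpoch (\<beta> * x) Q N / qpoch (\<alpha> * x) Q N * ((1 - \<beta> * x * Q ^ N) / (1 - \<alpha> * x * Q ^ N))
        = qpoch (\<beta> * x) Q (Suc N) / qpoch (\<alpha> * x) Q (Suc N)"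
      unfolding qpoch_Suc by (rule times_divide_times_eq)
    finally show ?case .
  qed (simp add: F_def)
  have "summable (\<lambda>j. c j * (1 / 2) ^ j)"
    using summable_norm_qpoch_hom_series[OF Q \<alpha>, of "1 / 2"] unfolding c_def
    by (rule summable_norm_cancel) simp
  then have "isCont F 0"
    unfolding F_def by (rule isCont_powser) simp
  moreover have "(\<lambda>N. x * Q ^ N) \<longlonglongrightarrow> 0"
    using tendsto_mult_left[OF LIMSEQ_power_zero[OF Q], of x] by simp
  ultimately have "(\<lambda>N. F (x * Q ^ N)) \<longlonglongrightarrow> F 0"
    by (rule isCont_tendsto_compose)
  moreover have "F 0 = 1"
    unfolding F_def using powser_zero[of c] by (simp add: c_def qpoch_hom_def)
  ultimately have lim: "(\<lambda>N. F (x * Q ^ N)) \<longlonglongrightarrow> 1"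
    by simp
  have "qpoch_inf (\<alpha> * x) Q \<noteq> 0"
    using Q norm_mult_less_one[OF \<alpha> x] by (rule qpoch_inf_nonzero)
  from tendsto_mult[OF tendsto_divide[OF qpoch_LIMSEQ[OF Q] qpoch_LIMSEQ[OF Q] this] lim]
  have "(\<lambda>N. qpoch (\<beta> * x) Q N / qpoch (\<alpha> * x) Q N * F (x * Q ^ N))
      \<longlonglongrightarrow> qpoch_inf (\<beta> * x) Q / qpoch_inf (\<alpha> * x) Q * 1" .
  also have "(\<lambda>N. qpoch (\<beta> * x) Q N / qpoch (\<alpha> * x) Q N * F (x * Q ^ N)) = (\<lambda>N. F x)"
    using iter by simp
  finally have "F x = qpoch_inf (\<beta> * x) Q / qpoch_inf (\<alpha> * x) Q"
    by (simp add: LIMSEQ_const_iff)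
  moreover have norm_summable: "summable (\<lambda>j. norm (c j * x ^ j))"
    unfolding c_def by (rule summable_norm_qpoch_hom_series[OF Q \<alpha> x])
  ultimately have "(\<lambda>j. c j * x ^ j) sums (qpoch_inf (\<beta> * x) Q / qpoch_inf (\<alpha> * x) Q)"
    unfolding F_def by (metis summable_norm_cancel summable_sums)
  with norm_summable show ?thesis
    unfolding c_def by (rule norm_summable_imp_has_sum)
qed

lemma euler_has_sum_inverse_qpoch_inf:
  fixes Q x :: complex
  assumes "norm Q < 1" "norm x < 1"
  shows "((\<lambda>j. x ^ j / qpoch Q Q j) has_sum 1 / qpoch_inf x Q) UNIV"
  using qpoch_hom_has_sum[OF assms(1) _ assms(2), of 1 0] assms
  by (simp add: qpoch_hom_one qpoch_def qpoch_inf_zero)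

lemma euler_has_sum_qpoch_inf:
  fixes Q x :: complex
  assumes "norm Q < 1" "norm x < 1"
  shows "((\<lambda>j. (-1) ^ j * Q ^ (j choose 2) / qpoch Q Q j * x ^ j) has_sum qpoch_inf x Q) UNIV"
  using qpoch_hom_has_sum[OF assms(1) _ assms(2), of 0 1] assms
  by (simp add: qpoch_hom_zero_one qpoch_inf_zero)

lemma qbinomial_has_sum:
  fixes Q a x :: complex
  assumes "norm Q < 1" "norm x < 1"
  shows "((\<lambda>j. qpoch a Q j / qpoch Q Q j * x ^ j) has_sum qpoch_inf (a * x) Q / qpoch_inf x Q) UNIV"
  using qpoch_hom_has_sum[OF assms(1) _ assms(2), of 1 a] by (simp add: qpoch_hom_one)

definition q2d_term ::
    "complex \<Rightarrow> (nat \<Rightarrow> complex) \<Rightarrow> complex \<Rightarrow> complex \<Rightarrow> nat \<Rightarrow> nat \<Rightarrow> nat \<Rightarrow> complex" where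
  "q2d_term Q A z1 z2 m n k = qbinom Q m k * qbinom Q n k * (-1) ^ k * Q ^ (k choose 2) * qpoch Q Q k
      * A k * z1 ^ (m - k) * z2 ^ (n - k)"

lemma qH_eq_sum_q2d_term: "qH z1 z2 Q m n = (\<Sum>k\<le>min m n. q2d_term Q (\<lambda>_. 1) z1 z2 m n k)"
  by (simp add: qH_def q2d_term_def)

lemma qp_eq_sum_q2d_term:
  "qp z1 z2 b Q m n = (\<Sum>k\<le>min m n. q2d_term Q (\<lambda>k. qpoch (b * Q) Q (m + n - k)) z1 z2 m n k)"
  by (simp add: qp_def q2d_term_def)

lemma sum_q2d_term_reweight:
  assumes "\<And>k. k \<le> min m n \<Longrightarrow> A k * S k = B k * C"
  shows "(\<Sum>k\<le>min m n. q2d_term Q A z1 z2 m n k * S k) = (\<Sum>k\<le>min m n. q2d_term Q B z1 z2 m n k) * C"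
  unfolding sum_distrib_right using assms
  by (intro sum.cong) (auto simp: q2d_term_def mult_ac)

lemma q2d_term_scaled:
  fixes q :: real and w z1 z2 :: complex
  assumes q: "0 < q" and k: "k \<le> min m n"
  shows "(w * of_real (q powr (real (m + n) / 2 + 1))) ^ j
           * q2d_term (of_real q) A (z1 * of_real (q powr (real j / 2))) (z2 * of_real (q powr (real j / 2))) m n k
         = q2d_term (of_real q) A z1 z2 m n k * (w * of_real q * of_real q ^ (m + n - k)) ^ j"
proof -
  have pow: "(q powr u) ^ t = q powr (real t * u)" for u t
    using q by (simp add: powr_power)
  have "(q powr (real (m + n) / 2 + 1)) ^ j * (q powr (real j / 2)) ^ (m - k) * (q powr (real j / 2)) ^ (n - k)
      = q powr (real j * (real (m + n) / 2 + 1) + real (m - k) * (real j / 2) + real (n - k) * (real j / 2))"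
    by (simp only: pow powr_add[symmetric])
  also have "\<dots> = q powr real (Suc (m + n - k) * j)"
    using k by (intro arg_cong[where f="(powr) q"]) (simp add: of_nat_diff field_simps)
  also have "\<dots> = (q * q ^ (m + n - k)) ^ j"
    by (simp only: powr_realpow[OF q] power_mult power_Suc)
  finally have "of_real ((q powr (real (m + n) / 2 + 1)) ^ j * (q powr (real j / 2)) ^ (m - k)
      * (q powr (real j / 2)) ^ (n - k)) = (complex_of_real q * of_real q ^ (m + n - k)) ^ j"
    by (metis of_real_mult of_real_power)
  then show ?thesis
    unfolding q2d_term_def by (simp add: power_mult_distrib mult_ac)
qed

lemma sums_scaled_q2d_sum:
  fixes q :: real and g :: "nat \<Rightarrow> complex"
  assumes q: "0 < q"
    and S: "\<And>k. k \<le> min m n \<Longrightarrow> (\<lambda>j. g j * (w * of_real q * of_real q ^ (m + n - k)) ^ j) sums S k"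
  shows "(\<lambda>j. g j * ((w * of_real (q powr (real (m + n) / 2 + 1))) ^ j
            * (\<Sum>k\<le>min m n. q2d_term (of_real q) A (z1 * of_real (q powr (real j / 2)))
                 (z2 * of_real (q powr (real j / 2))) m n k)))
         sums (\<Sum>k\<le>min m n. q2d_term (of_real q) A z1 z2 m n k * S k)"
proof -
  have "g j * ((w * of_real (q powr (real (m + n) / 2 + 1))) ^ j
          * (\<Sum>k\<le>min m n. q2d_term (of_real q) A (z1 * of_real (q powr (real j / 2)))
               (z2 * of_real (q powr (real j / 2))) m n k))
      = (\<Sum>k\<le>min m n. q2d_term (of_real q) A z1 z2 m n k
          * (g j * (w * of_real q * of_real q ^ (m + n - k)) ^ j))" for j
    unfolding sum_distrib_left
  proof (rule sum.cong[OF refl])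
    fix k
    assume "k \<in> {..min m n}"
    then show "g j * ((w * of_real (q powr (real (m + n) / 2 + 1))) ^ j
        * q2d_term (of_real q) A (z1 * of_real (q powr (real j / 2))) (z2 * of_real (q powr (real j / 2))) m n k)
      = q2d_term (of_real q) A z1 z2 m n k * (g j * (w * of_real q * of_real q ^ (m + n - k)) ^ j)"
      using q2d_term_scaled[OF q, of k m n w j A z1 z2] by (simp add: mult_ac)
  qed
  moreover have "(\<lambda>j. \<Sum>k\<le>min m n. q2d_term (of_real q) A z1 z2 m n k
          * (g j * (w * of_real q * of_real q ^ (m + n - k)) ^ j))
      sums (\<Sum>k\<le>min m n. q2d_term (of_real q) A z1 z2 m n k * S k)"
    using S by (intro sums_sum sums_mult) auto
  ultimately show ?thesis
    by simp
qed

lemma ultraspherical_eq_hermite_series: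
  fixes q :: real and b z1 z2 :: complex
  assumes q: "0 < q" "q < 1" and b: "norm (b * of_real q) < 1"
  shows "(\<lambda>j. (b * of_real (q powr (real (m + n) / 2 + 1))) ^ j / qpoch (of_real q) (of_real q) j
          * qH (z1 * of_real (q powr (real j / 2))) (z2 * of_real (q powr (real j / 2))) (of_real q) m n)
      sums (qp z1 z2 b (of_real q) m n / qpoch_inf (b * of_real q) (of_real q))"
proof -
  define Q where "Q = complex_of_real q"
  have Q: "norm Q < 1"
    using q by (simp add: Q_def)
  have b': "norm (b * Q) < 1"
    using b by (simp add: Q_def)
  have "(\<lambda>j. 1 / qpoch Q Q j * (b * Q * Q ^ (m + n - k)) ^ j)
      sums (qpoch (b * Q) Q (m + n - k) / qpoch_inf (b * Q) Q)" for k
    using has_sum_imp_sums[OF euler_has_sum_inverse_qpoch_inf[OF Q norm_mult_power_less_one[OF _ b',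
        of Q "m + n - k"]]] Q
    by (simp add: qpoch_inf_shift[OF Q b'])
  from sums_scaled_q2d_sum[OF q(1) this[unfolded Q_def], of "\<lambda>_. 1"]
  show ?thesis
    unfolding qH_eq_sum_q2d_term qp_eq_sum_q2d_term
    by (subst (asm) sum_q2d_term_reweight[where B="\<lambda>k. qpoch (b * of_real q) (of_real q) (m + n - k)"
          and C="1 / qpoch_inf (b * of_real q) (of_real q)"]) (simp_all add: mult_ac)
qed

lemma ultraspherical_connection_series:
  fixes q :: real and b c z1 z2 :: complex
  assumes q: "0 < q" "q < 1" and b: "norm (b * of_real q) < 1" and c: "norm (c * of_real q) < 1"
    and "b \<noteq> 0"
  shows "(\<lambda>j. qpoch (c / b) (of_real q) j / qpoch (of_real q) (of_real q) j
          * (b * of_real (q powr (real (m + n) / 2 + 1))) ^ j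
          * (qp (z1 * of_real (q powr (real j / 2))) (z2 * of_real (q powr (real j / 2))) c (of_real q) m n
             / qpoch_inf (c * of_real q) (of_real q)))
      sums (qp z1 z2 b (of_real q) m n / qpoch_inf (b * of_real q) (of_real q))"
proof -
  define Q where "Q = complex_of_real q"
  have Q: "norm Q < 1"
    using q by (simp add: Q_def)
  have b': "norm (b * Q) < 1" and c': "norm (c * Q) < 1"
    using b c by (simp_all add: Q_def)
  define K where "K = qpoch_inf (c * Q) Q / qpoch_inf (b * Q) Q"
  have "(\<lambda>j. qpoch (c / b) Q j / qpoch Q Q j * (b * Q * Q ^ (m + n - k)) ^ j)
      sums (qpoch (b * Q) Q (m + n - k) / qpoch (c * Q) Q (m + n - k) * K)" for k
  proof -
    have "c / b * (b * Q * Q ^ (m + n - k)) = c * Q * Q ^ (m + n - k)"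
      using \<open>b \<noteq> 0\<close> by simp
    then have "(\<lambda>j. qpoch (c / b) Q j / qpoch Q Q j * (b * Q * Q ^ (m + n - k)) ^ j)
        sums (qpoch_inf (c * Q * Q ^ (m + n - k)) Q / qpoch_inf (b * Q * Q ^ (m + n - k)) Q)"
      using has_sum_imp_sums[OF qbinomial_has_sum[OF Q norm_mult_power_less_one[OF _ b',
          of Q "m + n - k"], of "c / b"]] Q by simp
    also have "qpoch_inf (c * Q * Q ^ (m + n - k)) Q / qpoch_inf (b * Q * Q ^ (m + n - k)) Q
        = qpoch (b * Q) Q (m + n - k) / qpoch (c * Q) Q (m + n - k) * K"
      using qpoch_nonzero[OF _ b'] qpoch_nonzero[OF _ c'] Q
      by (simp add: qpoch_inf_shift[OF Q b'] qpoch_inf_shift[OF Q c'] K_def)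
    finally show ?thesis .
  qed
  from sums_scaled_q2d_sum[OF q(1) this[unfolded Q_def],
      of "\<lambda>k. qpoch (c * of_real q) (of_real q) (m + n - k)"]
  have "(\<lambda>j. qpoch (c / b) Q j / qpoch Q Q j * ((b * of_real (q powr (real (m + n) / 2 + 1))) ^ j
          * qp (z1 * of_real (q powr (real j / 2))) (z2 * of_real (q powr (real j / 2))) c Q m n))
      sums (qp z1 z2 b Q m n * K)"
    unfolding qp_eq_sum_q2d_term Q_def[symmetric]
    by (subst (asm) sum_q2d_term_reweight[where B="\<lambda>k. qpoch (b * Q) Q (m + n - k)" and C=K])
      (use qpoch_nonzero[OF _ c'] Q in simp_all)
  from sums_divide[OF this, of "qpoch_inf (c * Q) Q"]
  show ?thesis
    using qpoch_inf_nonzero[OF Q c'] unfolding Q_def[symmetric] by (simp add: K_def mult_ac)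
qed

lemma hermite_eq_ultraspherical_series:
  fixes q :: real and b z1 z2 :: complex
  assumes q: "0 < q" "q < 1" and b: "norm (b * of_real q) < 1"
  shows "(\<lambda>k. (- b * of_real (q powr (real (m + n) / 2 + 1))) ^ k / qpoch (of_real q) (of_real q) k
          * of_real q ^ (k choose 2)
          * qp (z1 * of_real (q powr (real k / 2))) (z2 * of_real (q powr (real k / 2))) b (of_real q) m n)
      sums (qH z1 z2 (of_real q) m n * qpoch_inf (b * of_real q) (of_real q))"
proof -
  define Q where "Q = complex_of_real q"
  have Q: "norm Q < 1"
    using q by (simp add: Q_def)
  have b': "norm (b * Q) < 1"
    using b by (simp add: Q_def)
  have "(\<lambda>j. (-1) ^ j * Q ^ (j choose 2) / qpoch Q Q j * (b * Q * Q ^ (m + n - k)) ^ j)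
      sums (qpoch_inf (b * Q) Q / qpoch (b * Q) Q (m + n - k))" for k
    using has_sum_imp_sums[OF euler_has_sum_qpoch_inf[OF Q norm_mult_power_less_one[OF _ b',
        of Q "m + n - k"]]] Q
    by (simp add: qpoch_inf_shift[OF Q b'])
  from sums_scaled_q2d_sum[OF q(1) this[unfolded Q_def],
      of "\<lambda>k. qpoch (b * of_real q) (of_real q) (m + n - k)"]
  have "(\<lambda>j. (-1) ^ j * Q ^ (j choose 2) / qpoch Q Q j * ((b * of_real (q powr (real (m + n) / 2 + 1))) ^ j
          * qp (z1 * of_real (q powr (real j / 2))) (z2 * of_real (q powr (real j / 2))) b Q m n))
      sums (qH z1 z2 Q m n * qpoch_inf (b * Q) Q)"
    unfolding qp_eq_sum_q2d_term qH_eq_sum_q2d_term Q_def[symmetric]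
    by (subst (asm) sum_q2d_term_reweight[where B="\<lambda>_. 1" and C="qpoch_inf (b * Q) Q"])
      (use qpoch_nonzero[OF _ b'] Q in simp_all)
  moreover have "(- b * R) ^ j = (-1) ^ j * (b * R) ^ j" for R :: complex and j
    by (simp add: power_mult_distrib[symmetric])
  ultimately show ?thesis
    unfolding Q_def[symmetric] by (simp only:) (simp add: mult_ac)
qed

lemma has_sum_product:
  fixes f :: "'a \<Rightarrow> complex" and g :: "'b \<Rightarrow> complex"
  assumes f: "(f has_sum S) A" and g: "(g has_sum T) B"
  shows "((\<lambda>(x, y). f x * g y) has_sum S * T) (A \<times> B)"
proof -
  have fa: "(\<lambda>x. norm (f x)) summable_on A" and ga: "(\<lambda>y. norm (g y)) summable_on B"
    using f g by (auto simp: summable_on_iff_abs_summable_on_complex[symmetric] dest: has_sum_imp_summable)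
  have "(\<lambda>p. norm ((\<lambda>(x, y). f x * g y) p)) summable_on A \<times> B"
  proof (rule Infinite_Sum.abs_summable_on_Sigma_iff[where f="\<lambda>(x, y). f x * g y", THEN iffD2], intro conjI ballI)
    fix x
    show "(\<lambda>y. norm ((\<lambda>(x, y). f x * g y) (x, y))) summable_on B"
      using summable_on_cmult_right[OF ga, of "norm (f x)"] by (simp add: norm_mult)
  next
    show "(\<lambda>x. norm (\<Sum>\<^sub>\<infinity>y\<in>B. norm ((\<lambda>(x, y). f x * g y) (x, y)))) summable_on A"
      using summable_on_cmult_left[OF fa, of "\<Sum>\<^sub>\<infinity>y\<in>B. norm (g y)"]
      by (simp add: norm_mult infsum_cmult_right' infsum_nonneg)
  qed
  then have "(\<lambda>(x, y). f x * g y) summable_on A \<times> B"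
    by (simp add: summable_on_iff_abs_summable_on_complex)
  then show ?thesis
    using has_sum_cmult_right[OF g] has_sum_cmult_left[OF f]
    by (intro has_sum_SigmaI[where g="\<lambda>x. f x * T"]) auto
qed

lemma has_sum_swap_dominated:
  fixes B :: "'b \<Rightarrow> complex" and H :: "'b \<Rightarrow> 'a \<Rightarrow> complex" and H0 :: "'a \<Rightarrow> complex"
  assumes B: "B summable_on UNIV" and H0: "H0 summable_on UNIV"
    and le: "\<And>j t. norm (H j t) \<le> norm (H0 t)"
    and V: "\<And>j. (H j has_sum V j) UNIV"
    and R: "\<And>t. ((\<lambda>j. B j * H j t) has_sum R t) UNIV"
  obtains S where "((\<lambda>j. B j * V j) has_sum S) UNIV" and "(R has_sum S) UNIV"
proof -
  define w where "w = (\<lambda>(j, t). B j * H j t)"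
  have "(\<lambda>(j, t). B j * H0 t) summable_on UNIV \<times> UNIV"
    using has_sum_product[OF has_sum_infsum[OF B] has_sum_infsum[OF H0]] by (rule has_sum_imp_summable)
  then have "(\<lambda>p. norm (case p of (j, t) \<Rightarrow> B j * H0 t)) summable_on UNIV \<times> UNIV"
    by (simp add: summable_on_iff_abs_summable_on_complex)
  moreover have "norm (w p) \<le> norm (case p of (j, t) \<Rightarrow> B j * H0 t)" for p
    by (cases p) (simp add: w_def norm_mult mult_left_mono le)
  ultimately have "(\<lambda>p. norm (w p)) summable_on UNIV \<times> UNIV"
    by (rule Infinite_Sum.abs_summable_on_comparison_test')
  then have w: "(w has_sum infsum w UNIV) (UNIV \<times> UNIV)"
    by (simp add: summable_on_iff_abs_summable_on_complex has_sum_infsum)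
  have "((\<lambda>j. B j * V j) has_sum infsum w UNIV) UNIV"
  proof (rule has_sum_Sigma'[OF w])
    fix j
    show "((\<lambda>t. w (j, t)) has_sum B j * V j) UNIV"
      unfolding w_def using has_sum_cmult_right[OF V] by simp
  qed
  moreover have "(R has_sum infsum w UNIV) UNIV"
  proof (rule has_sum_Sigma'[OF has_sum_swap[THEN iffD1, OF w]])
    fix t
    show "((\<lambda>j. (\<lambda>(t, j). w (j, t)) (t, j)) has_sum R t) UNIV"
      unfolding w_def using R by simp
  qed
  ultimately show thesis
    by (rule that)
qed

lemma has_sum_regroup_diagonal:
  fixes F :: "nat \<times> nat \<times> nat \<Rightarrow> complex"
  assumes "(F has_sum S) UNIV"
  shows "((\<lambda>(m, n). \<Sum>k\<le>min m n. F (k, m - k, n - k)) has_sum S) UNIV"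
proof -
  define D where "D = Sigma (UNIV :: (nat \<times> nat) set) (\<lambda>(m, n). {..min m n})"
  have "((\<lambda>((m, n), k). F (k, m - k, n - k)) has_sum S) D"
    unfolding D_def using assms
    by (subst has_sum_reindex_bij_witness[where i="\<lambda>(k, a, c). ((k + a, k + c), k)"
          and j="\<lambda>((m, n), k). (k, m - k, n - k)"]) auto
  then show ?thesis
    unfolding D_def by (rule has_sum_Sigma') (auto intro: has_sum_finite)
qed

lemma qp_generating_function_coeff:
  fixes Q b z1 z2 u v :: complex
  assumes Q: "norm Q < 1"
  shows "qp z1 z2 b Q m n / (qpoch Q Q m * qpoch Q Q n) * u ^ m * v ^ n
    = (\<Sum>k\<le>min m n. (-1) ^ k * Q ^ (k choose 2) / qpoch Q Q k * (u * v) ^ k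
        * ((u * z1) ^ (m - k) / qpoch Q Q (m - k)) * ((v * z2) ^ (n - k) / qpoch Q Q (n - k))
        * qpoch (b * Q) Q (m + n - k))"
  unfolding qp_def sum_divide_distrib sum_distrib_right
proof (rule sum.cong[OF refl])
  fix k
  assume "k \<in> {..min m n}"
  then have "u ^ m = u ^ k * u ^ (m - k)" "v ^ n = v ^ k * v ^ (n - k)"
    by (simp_all flip: power_add)
  moreover have "qpoch Q Q i \<noteq> 0" for i
    using Q by (intro qpoch_nonzero) auto
  ultimately show "qbinom Q m k * qbinom Q n k * (-1) ^ k * Q ^ (k choose 2) * qpoch Q Q k
      * qpoch (b * Q) Q (m + n - k) * z1 ^ (m - k) * z2 ^ (n - k) / (qpoch Q Q m * qpoch Q Q n) * u ^ m * v ^ n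
    = (-1) ^ k * Q ^ (k choose 2) / qpoch Q Q k * (u * v) ^ k
        * ((u * z1) ^ (m - k) / qpoch Q Q (m - k)) * ((v * z2) ^ (n - k) / qpoch Q Q (n - k))
        * qpoch (b * Q) Q (m + n - k)"
    by (simp add: qbinom_def power_mult_distrib field_simps)
qed

lemma qp_triple_series:
  fixes Q b X Y W :: complex
  assumes Q: "norm Q < 1" and b: "norm (b * Q) < 1"
    and X: "norm X < 1" and Y: "norm Y < 1" and W: "norm W < 1"
  obtains S where
    "((\<lambda>j. (b * Q) ^ j / qpoch Q Q j * qpoch_inf (W * Q ^ j) Q
        / (qpoch_inf (X * Q ^ j) Q * qpoch_inf (Y * Q ^ j) Q)) has_sum S) UNIV"
    "((\<lambda>(k, a, c). (-1) ^ k * Q ^ (k choose 2) / qpoch Q Q k * W ^ k * (X ^ a / qpoch Q Q a)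
        * (Y ^ c / qpoch Q Q c) * qpoch (b * Q) Q (k + a + c)) has_sum qpoch_inf (b * Q) Q * S) UNIV"
proof -
  have Q': "norm Q \<le> 1"
    using Q by simp
  define E where "E y k = (-1) ^ k * Q ^ (k choose 2) / qpoch Q Q k * y ^ k" for y k
  define I where "I y a = y ^ a / qpoch Q Q a" for y a
  define H where "H j = (\<lambda>(k, a, c). E (W * Q ^ j) k * (I (X * Q ^ j) a * I (Y * Q ^ j) c))" for j
  define B where "B j = (b * Q) ^ j / qpoch Q Q j" for j
  define V where "V j = qpoch_inf (W * Q ^ j) Q * (1 / qpoch_inf (X * Q ^ j) Q * (1 / qpoch_inf (Y * Q ^ j) Q))"
    for j
  define len where "len = (\<lambda>(k, a, c). k + a + c :: nat)"
  have HV: "(H j has_sum V j) UNIV" for j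
    using has_sum_product[OF euler_has_sum_qpoch_inf[OF Q norm_mult_power_less_one[OF Q' W]]
        has_sum_product[OF euler_has_sum_inverse_qpoch_inf[OF Q norm_mult_power_less_one[OF Q' X]]
          euler_has_sum_inverse_qpoch_inf[OF Q norm_mult_power_less_one[OF Q' Y]]]]
    unfolding H_def V_def E_def I_def by (simp add: case_prod_unfold)
  have H_scale: "H j t = H 0 t * (Q ^ j) ^ len t" for j t
    by (cases t) (simp add: H_def E_def I_def len_def power_mult_distrib power_add mult_ac)
  have le: "norm (H j t) \<le> norm (H 0 t)" for j t
    unfolding H_scale[of j] norm_mult
    using Q' by (intro mult_left_le) (auto simp: norm_power power_le_one)
  have R: "((\<lambda>j. B j * H j t) has_sum H 0 t * (1 / qpoch_inf (b * Q * Q ^ len t) Q)) UNIV" for t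
  proof -
    have "B j * H j t = H 0 t * ((b * Q * Q ^ len t) ^ j / qpoch Q Q j)" for j
      unfolding H_scale[of j] B_def by (simp add: power_mult_distrib mult_ac flip: power_mult)
    then show ?thesis
      using has_sum_cmult_right[OF euler_has_sum_inverse_qpoch_inf[OF Q norm_mult_power_less_one[OF Q' b]]]
      by simp
  qed
  have "B summable_on UNIV"
    unfolding B_def using euler_has_sum_inverse_qpoch_inf[OF Q b] by (rule has_sum_imp_summable)
  then obtain S where S: "((\<lambda>j. B j * V j) has_sum S) UNIV"
      and RS: "((\<lambda>t. H 0 t * (1 / qpoch_inf (b * Q * Q ^ len t) Q)) has_sum S) UNIV"
    using has_sum_swap_dominated[OF _ has_sum_imp_summable[OF HV[of 0]] le HV R] by blast
  show thesis
  proof (rule that)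
    show "((\<lambda>j. (b * Q) ^ j / qpoch Q Q j * qpoch_inf (W * Q ^ j) Q
        / (qpoch_inf (X * Q ^ j) Q * qpoch_inf (Y * Q ^ j) Q)) has_sum S) UNIV"
      using S by (simp add: B_def V_def)
    have "qpoch_inf (b * Q) Q * (H 0 t * (1 / qpoch_inf (b * Q * Q ^ len t) Q))
        = H 0 t * qpoch (b * Q) Q (len t)" for t
      using qpoch_inf_nonzero[OF Q b] qpoch_nonzero[OF Q' b] by (simp add: qpoch_inf_shift[OF Q b])
    then show "((\<lambda>(k, a, c). (-1) ^ k * Q ^ (k choose 2) / qpoch Q Q k * W ^ k * (X ^ a / qpoch Q Q a)
        * (Y ^ c / qpoch Q Q c) * qpoch (b * Q) Q (k + a + c)) has_sum qpoch_inf (b * Q) Q * S) UNIV"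
      using has_sum_cmult_right[OF RS, of "qpoch_inf (b * Q) Q"]
      by (simp add: H_def E_def I_def len_def case_prod_unfold mult_ac)
  qed
qed

lemma qp_generating_function:
  fixes Q b z1 z2 u v :: complex
  assumes Q: "norm Q < 1" and b: "norm (b * Q) < 1"
    and uz1: "norm (u * z1) < 1" and vz2: "norm (v * z2) < 1" and uv: "norm (u * v) < 1"
  defines "f \<equiv> \<lambda>j. (b * Q) ^ j / qpoch Q Q j * qpoch_inf (u * v * Q ^ j) Q
      / (qpoch_inf (u * z1 * Q ^ j) Q * qpoch_inf (v * z2 * Q ^ j) Q)"
    and "g \<equiv> \<lambda>j. qpoch (u * z1) Q j * qpoch (v * z2) Q j / (qpoch Q Q j * qpoch (u * v) Q j) * (b * Q) ^ j"
  shows "((\<lambda>(m, n). qp z1 z2 b Q m n / (qpoch Q Q m * qpoch Q Q n) * u ^ m * v ^ n)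
           has_sum qpoch_inf (b * Q) Q * suminf f) UNIV"
    and "summable f" and "summable g"
    and "qpoch_inf (b * Q) Q * suminf f
      = qpoch_inf (b * Q) Q * qpoch_inf (u * v) Q / (qpoch_inf (u * z1) Q * qpoch_inf (v * z2) Q) * suminf g"
proof -
  have Q': "norm Q \<le> 1"
    using Q by simp
  obtain S where fS: "(f has_sum S) UNIV"
    and triple: "((\<lambda>(k, a, c). (-1) ^ k * Q ^ (k choose 2) / qpoch Q Q k * (u * v) ^ k
        * ((u * z1) ^ a / qpoch Q Q a) * ((v * z2) ^ c / qpoch Q Q c) * qpoch (b * Q) Q (k + a + c))
        has_sum qpoch_inf (b * Q) Q * S) UNIV"
    using qp_triple_series[OF Q b uz1 vz2 uv] unfolding f_def by blast
  have f: "f sums S"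
    using fS by (rule has_sum_imp_sums)
  then show "summable f"
    by (rule sums_summable)
  show "((\<lambda>(m, n). qp z1 z2 b Q m n / (qpoch Q Q m * qpoch Q Q n) * u ^ m * v ^ n)
      has_sum qpoch_inf (b * Q) Q * suminf f) UNIV"
  proof -
    have "qp z1 z2 b Q m n / (qpoch Q Q m * qpoch Q Q n) * u ^ m * v ^ n
      = (\<Sum>k\<le>min m n. (-1) ^ k * Q ^ (k choose 2) / qpoch Q Q k * (u * v) ^ k
        * ((u * z1) ^ (m - k) / qpoch Q Q (m - k)) * ((v * z2) ^ (n - k) / qpoch Q Q (n - k))
        * qpoch (b * Q) Q (k + (m - k) + (n - k)))" for m n
      unfolding qp_generating_function_coeff[OF Q] by (intro sum.cong refl) auto
    then show ?thesis
      using has_sum_regroup_diagonal[OF triple] sums_unique[OF f] by simp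
  qed
  define K where "K = qpoch_inf (u * v) Q / (qpoch_inf (u * z1) Q * qpoch_inf (v * z2) Q)"
  have "K \<noteq> 0"
    using qpoch_inf_nonzero[OF Q] uz1 vz2 uv by (simp add: K_def)
  have "f j = K * g j" for j
    unfolding f_def g_def K_def qpoch_inf_shift[OF Q uz1] qpoch_inf_shift[OF Q vz2] qpoch_inf_shift[OF Q uv]
    using qpoch_inf_nonzero[OF Q] qpoch_nonzero[OF Q'] uz1 vz2 uv by (simp add: field_simps)
  then have "f = (\<lambda>j. K * g j)"
    by (rule ext)
  with \<open>K \<noteq> 0\<close> have "g sums (S / K)"
    using sums_divide[OF f, of K] by simp
  then show "summable g" and "qpoch_inf (b * Q) Q * suminf f
      = qpoch_inf (b * Q) Q * qpoch_inf (u * v) Q / (qpoch_inf (u * z1) Q * qpoch_inf (v * z2) Q) * suminf g"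
    using sums_unique[OF f] \<open>K \<noteq> 0\<close> by (auto simp: sums_iff K_def)
qed

theorem theorem5p2:
  fixes q :: real and b z1 z2 :: complex and m n :: nat
  assumes "0 < q" and "q < 1" and "norm (b * of_real q) < 1"
  shows
   "(\<forall>u v :: complex. norm (u * z1) < 1 \<and> norm (v * z2) < 1 \<and> norm (u * v) < 1 \<longrightarrow>
      ((\<lambda>(m, n). qp z1 z2 b (of_real q) m n / (qpoch (of_real q) (of_real q) m * qpoch (of_real q) (of_real q) n)
            * u ^ m * v ^ n)
        has_sum
        (qpoch_inf (b * of_real q) (of_real q) *
           (\<Sum>j. (b * of_real q) ^ j / qpoch (of_real q) (of_real q) j
              * qpoch_inf (u * v * of_real q ^ j) (of_real q)
              / (qpoch_inf (u * z1 * of_real q ^ j) (of_real q) * qpoch_inf (v * z2 * of_real q ^ j) (of_real q))))) UNIV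
      \<and> summable (\<lambda>j. (b * of_real q) ^ j / qpoch (of_real q) (of_real q) j
              * qpoch_inf (u * v * of_real q ^ j) (of_real q)
              / (qpoch_inf (u * z1 * of_real q ^ j) (of_real q) * qpoch_inf (v * z2 * of_real q ^ j) (of_real q)))
      \<and> summable (\<lambda>j. qpoch (u * z1) (of_real q) j * qpoch (v * z2) (of_real q) j
              / (qpoch (of_real q) (of_real q) j * qpoch (u * v) (of_real q) j) * (b * of_real q) ^ j)
      \<and> qpoch_inf (b * of_real q) (of_real q) *
           (\<Sum>j. (b * of_real q) ^ j / qpoch (of_real q) (of_real q) j
              * qpoch_inf (u * v * of_real q ^ j) (of_real q)
              / (qpoch_inf (u * z1 * of_real q ^ j) (of_real q) * qpoch_inf (v * z2 * of_real q ^ j) (of_real q)))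
        = qpoch_inf (b * of_real q) (of_real q) * qpoch_inf (u * v) (of_real q)
            / (qpoch_inf (u * z1) (of_real q) * qpoch_inf (v * z2) (of_real q))
          * (\<Sum>j. qpoch (u * z1) (of_real q) j * qpoch (v * z2) (of_real q) j
              / (qpoch (of_real q) (of_real q) j * qpoch (u * v) (of_real q) j) * (b * of_real q) ^ j))
  \<and> (\<forall>c :: complex. norm (c * of_real q) < 1 \<and> b \<noteq> 0 \<longrightarrow>
      (\<lambda>j. qpoch (c / b) (of_real q) j / qpoch (of_real q) (of_real q) j
          * (b * of_real (q powr (real (m + n) / 2 + 1))) ^ j
          * (qp (z1 * of_real (q powr (real j / 2))) (z2 * of_real (q powr (real j / 2))) c (of_real q) m n
             / qpoch_inf (c * of_real q) (of_real q)))
      sums (qp z1 z2 b (of_real q) m n / qpoch_inf (b * of_real q) (of_real q)))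
  \<and> (\<lambda>j. (b * of_real (q powr (real (m + n) / 2 + 1))) ^ j / qpoch (of_real q) (of_real q) j
          * qH (z1 * of_real (q powr (real j / 2))) (z2 * of_real (q powr (real j / 2))) (of_real q) m n)
      sums (qp z1 z2 b (of_real q) m n / qpoch_inf (b * of_real q) (of_real q))
  \<and> summable (\<lambda>k. (- b * of_real (q powr (real (m + n) / 2 + 1))) ^ k / qpoch (of_real q) (of_real q) k
          * of_real q ^ (k choose 2)
          * qp (z1 * of_real (q powr (real k / 2))) (z2 * of_real (q powr (real k / 2))) b (of_real q) m n)
  \<and> qH z1 z2 (of_real q) m n = 1 / qpoch_inf (b * of_real q) (of_real q) *
      (\<Sum>k. (- b * of_real (q powr (real (m + n) / 2 + 1))) ^ k / qpoch (of_real q) (of_real q) k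
          * of_real q ^ (k choose 2)
          * qp (z1 * of_real (q powr (real k / 2))) (z2 * of_real (q powr (real k / 2))) b (of_real q) m n)"
proof -
  have Q: "norm (complex_of_real q) < 1"
    using assms(1,2) by simp
  note inverse = hermite_eq_ultraspherical_series[OF assms, of m n z1 z2]
  have "qpoch_inf (b * of_real q) (of_real q) \<noteq> 0"
    using Q assms(3) by (rule qpoch_inf_nonzero)
  with inverse show ?thesis
    using qp_generating_function[OF Q assms(3)] ultraspherical_connection_series[OF assms]
      ultraspherical_eq_hermite_series[OF assms] sums_summable[OF inverse]
    by (auto simp: sums_iff)
qed

end
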